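(* Let $q\ge 2$ and let $$F_q(x,y)=1-e^x-e^y+\big(1-x-y-(q-2)xy+xe^{(q-2)y}+ye^{(q-2)x}\big)e^{x+y}.$$ Then, as formal power series in $x,y$, $$\sum_{m=0}^{\infty}\sum_{n=0}^{\infty}B_m^{(-n)}(q)\frac{x^m}{m!}\frac{y^n}{n!}=\frac{e^{x+y}}{1-F_q(x,y)}.$$ Moreover $F_q(x,y)=\sum_{r\ge1}\sum_{s\ge1}f_q(r,s)\frac{x^r}{r!}\frac{y^s}{s!}$ with $f_q(r,s)=1+(q-2)rs+r\big((q-1)^s-(q-2)s-1\big)+s\big((q-1)^r-(q-2)r-1\big)$.
   Context: A $q$-ary matrix has entries in $\{0,1,\ldots,q-1\}$; a $q$-ary $m\times n$ matrix is a strong lonesum matrix if no other $q$-ary $m\times n$ matrix has the same row sums and column sums. $B_m^{(-n)}(q)$ denotes the number of $q$-ary strong lonesum $m\times n$ matrices, with the convention $B_0^{(-n)}(q)=B_m^{(-0)}(q)=1$ (the empty matrix). *)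

theory Defs
  imports "HOL-Computational_Algebra.Formal_Power_Series"
begin

text \<open>An m x n matrix is represented as a function nat => nat => nat whose
entries at positions (i,j) with i < m, j < n lie in {0..q-1}, and which is 0
outside the m x n box (so that matrices correspond bijectively to such functions).\<close>

definition qary_matrices :: "nat \<Rightarrow> nat \<Rightarrow> nat \<Rightarrow> (nat \<Rightarrow> nat \<Rightarrow> nat) set" where
  "qary_matrices q m n =
     {A. (\<forall>i<m. \<forall>j<n. A i j < q) \<and> (\<forall>i j. (m \<le> i \<or> n \<le> j) \<longrightarrow> A i j = 0)}"

definition row_sum :: "nat \<Rightarrow> (nat \<Rightarrow> nat \<Rightarrow> nat) \<Rightarrow> nat \<Rightarrow> nat" where
  "row_sum n A i = (\<Sum>j<n. A i j)"

definition col_sum :: "nat \<Rightarrow> (nat \<Rightarrow> nat \<Rightarrow> nat) \<Rightarrow> nat \<Rightarrow> nat" where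
  "col_sum m A j = (\<Sum>i<m. A i j)"

definition strong_lonesum :: "nat \<Rightarrow> nat \<Rightarrow> nat \<Rightarrow> (nat \<Rightarrow> nat \<Rightarrow> nat) \<Rightarrow> bool" where
  "strong_lonesum q m n A \<longleftrightarrow>
     A \<in> qary_matrices q m n \<and>
     (\<forall>B \<in> qary_matrices q m n.
        (\<forall>i<m. row_sum n B i = row_sum n A i) \<and> (\<forall>j<n. col_sum m B j = col_sum m A j)
        \<longrightarrow> B = A)"

text \<open>B_m^{(-n)}(q): number of q-ary strong lonesum m x n matrices.
For m = 0 or n = 0 the only matrix is the empty one (the zero function), so the
value is 1, matching the convention.\<close>
definition lonesum_count :: "nat \<Rightarrow> nat \<Rightarrow> nat \<Rightarrow> nat" where
  "lonesum_count q m n = card {A. strong_lonesum q m n A}"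

text \<open>Bivariate formal power series in x, y are represented as real fps fps:
the outer variable is y, the inner variable (in the coefficient ring) is x.
So the coefficient of x^m y^n of G is (G $ n) $ m.\<close>

definition varX :: "real fps fps" where "varX = fps_const fps_X"
definition varY :: "real fps fps" where "varY = fps_X"

definition expX :: "real \<Rightarrow> real fps fps" where
  "expX c = fps_const (Abs_fps (\<lambda>m. c ^ m / fact m))"
definition expY :: "real \<Rightarrow> real fps fps" where
  "expY c = Abs_fps (\<lambda>n. fps_const (c ^ n / fact n))"

definition F_q :: "nat \<Rightarrow> real fps fps" where
  "F_q q = 1 - expX 1 - expY 1
     + (1 - varX - varY - fps_const (fps_const (real q - 2)) * varX * varY
        + varX * expY (real q - 2) + varY * expX (real q - 2)) * (expX 1 * expY 1)"

definition f_q :: "nat \<Rightarrow> nat \<Rightarrow> nat \<Rightarrow> real" where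
  "f_q q r s = 1 + (real q - 2) * r * s + r * ((real q - 1) ^ s - (real q - 2) * s - 1)
                 + s * ((real q - 1) ^ r - (real q - 2) * r - 1)"

definition lonesum_egf :: "nat \<Rightarrow> real fps fps" where
  "lonesum_egf q = Abs_fps (\<lambda>n. Abs_fps (\<lambda>m. real (lonesum_count q m n) / (fact m * fact n)))"

end

theory Submission
  imports Defs "HOL-Library.FuncSet"
begin

text \<open>
  Call a q-ary matrix A on rows I and columns J switch-free if there are no
  rows a, b and columns c, d (a \<noteq> b, c \<noteq> d) such that A a c, A b d < q - 1 and
  A a d, A b c > 0; such a 2 x 2 pattern can be modified by +1/-1 without changing margins.
  \<^item> A matrix is strong lonesum iff it is switch-free.  One direction is the +1/-1 modification;
    for the other, a nonzero switch-free matrix has a canonical block: the rows R whose support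
    contains every nonzero column, and the columns C meeting only rows of R.  The margins force
    any competitor to agree with A off R x C and on R x C; the rest is handled by induction.
  \<^item> The decomposition A \<mapsto> (R, C, A on R x C, A on the complement) is a bijection between the
    nonzero switch-free matrices and the triples with R, C nonempty, a positive switch-free
    block on R x C, and a switch-free matrix on (I - R) x (J - C).  Positive switch-free
    blocks are exactly the positive matrices that equal q - 1 outside a single row or column;
    inclusion-exclusion counts them as f_q q |R| |C|.
  \<^item> Hence the counts satisfy the recursion
    b(m,n) = 1 + \<Sum>r s. (m choose r)(n choose s) f_q q r s b(m-r, n-s),
    which is exactly the coefficient recursion of G = e^(x+y)/(1 - F_q) coming from
    G = e^(x+y) + F_q G, once the coefficients of F_q are computed.
\<close>

unbundle fps_syntax

section \<open>Coefficients of the generating function\<close>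

text \<open>Series of product form a(x) b(y); all series in the theorem are combinations of these.\<close>

definition lift_y :: "real fps \<Rightarrow> real fps fps" where
  "lift_y b = Abs_fps (\<lambda>n. fps_const (b $ n))"

definition xy_prod :: "real fps \<Rightarrow> real fps \<Rightarrow> real fps fps" where
  "xy_prod a b = fps_const a * lift_y b"

lemma xy_prod_nth [simp]: "xy_prod a b $ n $ m = a $ m * b $ n"
  by (simp add: xy_prod_def lift_y_def)

lemma fps_const_sum: "fps_const (sum f A) = (\<Sum>x\<in>A. fps_const (f x))"
  by (induction A rule: infinite_finite_induct) (auto simp: fps_const_add [symmetric])

lemma lift_y_mult: "lift_y b * lift_y d = lift_y (b * d)"
  by (rule fps_ext)
    (simp add: lift_y_def fps_mult_nth fps_const_sum fps_const_mult [symmetric] del: fps_const_mult)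

lemma xy_prod_mult: "xy_prod a b * xy_prod c d = xy_prod (a * c) (b * d)"
proof -
  have "xy_prod a b * xy_prod c d = fps_const (a * c) * (lift_y b * lift_y d)"
    by (simp add: xy_prod_def ac_simps)
  thus ?thesis by (simp add: lift_y_mult xy_prod_def)
qed

lemma xy_prod_one: "xy_prod 1 1 = 1"
  by (rule fps_ext) (simp add: xy_prod_def lift_y_def)

lemma expX_xy_prod: "expX c = xy_prod (fps_exp c) 1"
  by (rule fps_ext) (simp add: xy_prod_def lift_y_def expX_def fps_exp_def)

lemma expY_xy_prod: "expY c = xy_prod 1 (fps_exp c)"
  by (rule fps_ext) (simp add: xy_prod_def lift_y_def expY_def)

lemma varX_xy_prod: "varX = xy_prod fps_X 1"
  by (rule fps_ext) (simp add: xy_prod_def lift_y_def varX_def)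

lemma varY_xy_prod: "varY = xy_prod 1 fps_X"
  by (rule fps_ext) (auto simp: xy_prod_def lift_y_def varY_def fps_X_def)

lemma const_xy_prod: "fps_const (fps_const k) = xy_prod (fps_const k) 1"
  by (rule fps_ext) (simp add: xy_prod_def lift_y_def)

lemma fps_X_times_exp_nth:
  fixes c :: real
  shows "(fps_X * fps_exp c) $ r = c ^ (r - 1) * r / fact r"
proof (cases r)
  case (Suc n)
  have "fact (Suc n) = real (Suc n) * fact n" by simp
  moreover have "fact n > (0::real)" by simp
  ultimately show ?thesis using Suc by (simp del: fact_Suc add: divide_simps)
qed simp

text \<open>F_q as a combination of product series, using e^x e^((q-2)x) = e^((q-1)x).\<close>

lemma F_q_xy_prod:
  "F_q q = xy_prod 1 1 - xy_prod (fps_exp 1) 1 - xy_prod 1 (fps_exp 1)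
     + xy_prod (fps_exp 1) (fps_exp 1) - xy_prod (fps_X * fps_exp 1) (fps_exp 1)
     - xy_prod (fps_exp 1) (fps_X * fps_exp 1)
     - xy_prod (fps_const (real q - 2) * (fps_X * fps_exp 1)) (fps_X * fps_exp 1)
     + xy_prod (fps_X * fps_exp 1) (fps_exp (real q - 1))
     + xy_prod (fps_exp (real q - 1)) (fps_X * fps_exp 1)"
proof -
  have exp_sum: "fps_exp 1 * fps_exp (real q - 2) = fps_exp (real q - 1)"
    by (simp add: fps_exp_add_mult [symmetric])
  show ?thesis
    unfolding F_q_def expX_xy_prod expY_xy_prod varX_xy_prod varY_xy_prod const_xy_prod xy_prod_one [symmetric]
    by (simp add: xy_prod_mult algebra_simps exp_sum)
qed

lemma F_q_nth:
  "F_q q $ s $ r = (if 1 \<le> r \<and> 1 \<le> s then f_q q r s / (fact r * fact s) else 0)"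
proof -
  have one: "(1::real fps) $ r = (if r = 0 then 1 else 0)" for r by simp
  have val: "F_q q $ s $ r =
      (if r = 0 then 1 else 0) * (if s = 0 then 1 else 0) - (if s = 0 then 1 / fact r else 0)
      - (if r = 0 then 1 / fact s else 0) + 1 / (fact r * fact s) - r / (fact r * fact s)
      - s / (fact r * fact s) - (real q - 2) * r * s / (fact r * fact s)
      + r * (real q - 1) ^ s / (fact r * fact s) + s * (real q - 1) ^ r / (fact r * fact s)"
    unfolding F_q_xy_prod
    by (simp only: fps_sub_nth fps_add_nth xy_prod_nth fps_X_times_exp_nth one fps_exp_nth
        fps_mult_left_const_nth fps_nth_fps_const)
      (cases "r = 0"; cases "s = 0"; simp add: field_simps power_0_left)
  show ?thesis unfolding val f_q_def by (cases "r = 0"; cases "s = 0"; simp add: field_simps)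
qed

definition gf_series :: "nat \<Rightarrow> real fps fps" where
  "gf_series q = (expX 1 * expY 1) * inverse (1 - F_q q)"

definition gf_count :: "nat \<Rightarrow> nat \<Rightarrow> nat \<Rightarrow> real" where
  "gf_count q m n = fact m * fact n * gf_series q $ n $ m"

text \<open>Since 1 - F_q has constant term 1, it is invertible and G = e^(x+y) + F_q G.\<close>

lemma gf_series_fixpoint: "gf_series q = expX 1 * expY 1 + F_q q * gf_series q"
proof -
  define H where "H = 1 - F_q q"
  have H0: "H $ 0 = 1"
    unfolding H_def by (rule fps_ext) (simp add: F_q_nth)
  have "inverse H = fps_right_inverse H (inverse (H $ 0))"
    by (simp add: fps_inverse_def)
  hence inv: "H * inverse H = 1"
    using fps_right_inverse [of H 1] by (simp add: H0)
  have "gf_series q = expX 1 * expY 1 * (H * inverse H) + F_q q * gf_series q"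
    unfolding gf_series_def H_def by (simp add: algebra_simps)
  thus ?thesis by (simp add: inv)
qed

text \<open>Comparing coefficients in the fixpoint equation gives the recursion for the counts.\<close>

lemma gf_count_rec:
  "gf_count q m n = 1 + (\<Sum>s\<le>n. \<Sum>r\<le>m. real (m choose r) * real (n choose s) *
     (if 1 \<le> r \<and> 1 \<le> s then f_q q r s else 0) * gf_count q (m - r) (n - s))"
proof -
  let ?G = "gf_series q"
  have "?G $ n $ m = 1 / (fact m * fact n)
      + (\<Sum>s\<le>n. \<Sum>r\<le>m. F_q q $ s $ r * ?G $ (n - s) $ (m - r))"
    by (subst gf_series_fixpoint)
      (simp add: expX_xy_prod expY_xy_prod xy_prod_mult fps_mult_nth atLeast0AtMost fps_sum_nth)
  hence "gf_count q m n = 1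
      + (\<Sum>s\<le>n. \<Sum>r\<le>m. fact m * fact n * (F_q q $ s $ r * ?G $ (n - s) $ (m - r)))"
    unfolding gf_count_def by (simp add: sum_distrib_left distrib_left)
  also have "\<dots> = 1 + (\<Sum>s\<le>n. \<Sum>r\<le>m. real (m choose r) * real (n choose s) *
     (if 1 \<le> r \<and> 1 \<le> s then f_q q r s else 0) * gf_count q (m - r) (n - s))"
    by (intro arg_cong2 [where f = "(+)"] refl sum.cong)
      (simp add: F_q_nth gf_count_def binomial_fact field_simps)
  finally show ?thesis .
qed

lemma sum_Pow_by_card:
  fixes g :: "nat \<Rightarrow> real"
  assumes "finite I"
  shows "(\<Sum>R\<in>Pow I. g (card R)) = (\<Sum>r\<le>card I. real (card I choose r) * g r)"
proof -
  have "(\<Sum>R\<in>Pow I. g (card R)) = (\<Sum>r\<le>card I. \<Sum>R\<in>{R. R \<in> Pow I \<and> card R = r}. g (card R))"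
    by (rule sum.group [symmetric]) (use assms card_mono in auto)
  also have "\<dots> = (\<Sum>r\<le>card I. real (card I choose r) * g r)"
  proof (rule sum.cong [OF refl])
    fix r
    have "(\<Sum>R\<in>{R. R \<in> Pow I \<and> card R = r}. g (card R)) = (\<Sum>R\<in>{R. R \<subseteq> I \<and> card R = r}. g r)"
      by (rule sum.cong) auto
    thus "(\<Sum>R\<in>{R. R \<in> Pow I \<and> card R = r}. g (card R)) = real (card I choose r) * g r"
      using n_subsets [OF assms, of r] by simp
  qed
  finally show ?thesis .
qed

lemma card_sunflower:
  assumes "finite K" "K \<noteq> {}" "\<And>k. k \<in> K \<Longrightarrow> finite (S k) \<and> Z \<subseteq> S k"
    and "\<And>k k'. k \<in> K \<Longrightarrow> k' \<in> K \<Longrightarrow> k \<noteq> k' \<Longrightarrow> S k \<inter> S k' = Z"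
  shows "card (\<Union>k\<in>K. S k) = card Z + (\<Sum>k\<in>K. card (S k) - card Z)"
proof -
  have split: "(\<Union>k\<in>K. S k) = Z \<union> (\<Union>k\<in>K. S k - Z)" using assms(2,3) by blast
  have finZ: "finite Z" using assms(2,3) finite_subset by blast
  have "card (\<Union>k\<in>K. S k - Z) = (\<Sum>k\<in>K. card (S k - Z))"
    by (rule card_UN_disjoint) (use assms in auto)
  also have "\<dots> = (\<Sum>k\<in>K. card (S k) - card Z)" using assms(3) by (simp add: card_Diff_subset finZ)
  finally show ?thesis
    unfolding split using assms(1,3) finZ by (subst card_Un_disjoint) auto
qed

section \<open>Matrices, margins and switches\<close>

definition matrices_on :: "nat \<Rightarrow> nat set \<Rightarrow> nat set \<Rightarrow> (nat \<Rightarrow> nat \<Rightarrow> nat) set" where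
  "matrices_on q I J = {A. (\<forall>i\<in>I. \<forall>j\<in>J. A i j < q) \<and> (\<forall>i j. i \<notin> I \<or> j \<notin> J \<longrightarrow> A i j = 0)}"

text \<open>A switch: a 2 x 2 submatrix that can be changed by +1/-1 keeping all margins.\<close>

definition has_switch :: "nat \<Rightarrow> nat set \<Rightarrow> nat set \<Rightarrow> (nat \<Rightarrow> nat \<Rightarrow> nat) \<Rightarrow> bool" where
  "has_switch q I J A \<longleftrightarrow> (\<exists>a\<in>I. \<exists>b\<in>I. \<exists>c\<in>J. \<exists>d\<in>J. a \<noteq> b \<and> c \<noteq> d \<and>
      A a c < q - 1 \<and> A b d < q - 1 \<and> 0 < A a d \<and> 0 < A b c)"

definition switch_free :: "nat \<Rightarrow> nat set \<Rightarrow> nat set \<Rightarrow> (nat \<Rightarrow> nat \<Rightarrow> nat) set" where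
  "switch_free q I J = {A \<in> matrices_on q I J. \<not> has_switch q I J A}"

definition same_margins ::
    "nat set \<Rightarrow> nat set \<Rightarrow> (nat \<Rightarrow> nat \<Rightarrow> nat) \<Rightarrow> (nat \<Rightarrow> nat \<Rightarrow> nat) \<Rightarrow> bool" where
  "same_margins I J A B \<longleftrightarrow>
     (\<forall>i\<in>I. (\<Sum>j\<in>J. B i j) = (\<Sum>j\<in>J. A i j)) \<and> (\<forall>j\<in>J. (\<Sum>i\<in>I. B i j) = (\<Sum>i\<in>I. A i j))"

definition restrict_mat :: "nat set \<Rightarrow> nat set \<Rightarrow> (nat \<Rightarrow> nat \<Rightarrow> nat) \<Rightarrow> nat \<Rightarrow> nat \<Rightarrow> nat" where
  "restrict_mat S T A = (\<lambda>i j. if i \<in> S \<and> j \<in> T then A i j else 0)"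

lemma finite_matrices_on:
  assumes "finite I" "finite J"
  shows "finite (matrices_on q I J)"
proof -
  let ?h = "\<lambda>f i j. if i \<in> I \<and> j \<in> J then f (i, j) else (0::nat)"
  have "matrices_on q I J \<subseteq> ?h ` (I \<times> J \<rightarrow>\<^sub>E {..<q})"
  proof
    fix A assume A: "A \<in> matrices_on q I J"
    have "A = ?h (restrict (\<lambda>(i, j). A i j) (I \<times> J))"
      using A by (auto simp: matrices_on_def fun_eq_iff)
    moreover have "restrict (\<lambda>(i, j). A i j) (I \<times> J) \<in> I \<times> J \<rightarrow>\<^sub>E {..<q}"
      using A by (auto simp: matrices_on_def)
    ultimately show "A \<in> ?h ` (I \<times> J \<rightarrow>\<^sub>E {..<q})" by blast
  qed
  moreover have "finite (I \<times> J \<rightarrow>\<^sub>E {..<q})" using assms by (intro finite_PiE) auto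
  ultimately show ?thesis by (meson finite_imageI finite_subset)
qed

lemma finite_switch_free:
  assumes "finite I" "finite J"
  shows "finite (switch_free q I J)"
  using finite_matrices_on [OF assms, of q] by (rule finite_subset [rotated]) (auto simp: switch_free_def)

lemma same_margins_transpose:
  "same_margins C R (\<lambda>j i. A i j) (\<lambda>j i. B i j) \<longleftrightarrow> same_margins R C A B"
  by (auto simp: same_margins_def)

lemma same_margins_cong:
  assumes "\<And>i j. i \<in> I \<Longrightarrow> j \<in> J \<Longrightarrow> A i j = A' i j"
  shows "same_margins I J A B \<longleftrightarrow> same_margins I J A' B"
  using assms by (auto simp: same_margins_def intro!: sum.cong)

lemma qary_matrices_eq: "qary_matrices q m n = matrices_on q {..<m} {..<n}"
  unfolding qary_matrices_def matrices_on_def by auto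

lemma margins_eq_same_margins:
  "((\<forall>i<m. row_sum n B i = row_sum n A i) \<and> (\<forall>j<n. col_sum m B j = col_sum m A j))
     \<longleftrightarrow> same_margins {..<m} {..<n} A B"
  by (simp add: same_margins_def row_sum_def col_sum_def lessThan_iff Ball_def)

lemma same_margins_blocks:
  assumes "same_margins I J A B" "R \<subseteq> I" "C \<subseteq> J" "finite I" "finite J"
    and "\<And>i j. i \<in> R \<Longrightarrow> j \<in> J - C \<Longrightarrow> B i j = A i j"
    and "\<And>i j. i \<in> I - R \<Longrightarrow> j \<in> C \<Longrightarrow> B i j = A i j"
  shows "same_margins R C A B" "same_margins (I - R) (J - C) A B"
proof -
  have rows: "(\<Sum>j\<in>T. B i j) = (\<Sum>j\<in>T. A i j)"
    if "i \<in> I" "T = C \<and> i \<in> R \<or> T = J - C \<and> i \<in> I - R" for i T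
  proof -
    have "(\<Sum>j\<in>J - T. B i j) = (\<Sum>j\<in>J - T. A i j)"
      using that assms(6,7) by (intro sum.cong) auto
    moreover have "(\<Sum>j\<in>J. B i j) = (\<Sum>j\<in>J. A i j)" using assms(1) that(1) by (simp add: same_margins_def)
    moreover have "T \<subseteq> J" using that assms(3) by auto
    ultimately show ?thesis
      using sum.subset_diff [of T J "B i"] sum.subset_diff [of T J "A i"] assms(5) by simp
  qed
  have cols: "(\<Sum>i\<in>S. B i j) = (\<Sum>i\<in>S. A i j)"
    if "j \<in> J" "S = R \<and> j \<in> C \<or> S = I - R \<and> j \<in> J - C" for j S
  proof -
    have "(\<Sum>i\<in>I - S. B i j) = (\<Sum>i\<in>I - S. A i j)"
      using that assms(6,7) assms(2) by (intro sum.cong) auto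
    moreover have "(\<Sum>i\<in>I. B i j) = (\<Sum>i\<in>I. A i j)" using assms(1) that(1) by (simp add: same_margins_def)
    moreover have "S \<subseteq> I" using that assms(2) by auto
    ultimately show ?thesis
      using sum.subset_diff [of S I "\<lambda>i. B i j"] sum.subset_diff [of S I "\<lambda>i. A i j"] assms(4) by simp
  qed
  show "same_margins R C A B" "same_margins (I - R) (J - C) A B"
    unfolding same_margins_def using rows cols assms(2,3) by blast+
qed

lemma switch_breaks_uniqueness:
  assumes A: "A \<in> matrices_on q I J" and sw: "has_switch q I J A" and fin: "finite I" "finite J"
  obtains B where "B \<in> matrices_on q I J" "same_margins I J A B" "B \<noteq> A"
proof -
  obtain a b c d where abcd: "a \<in> I" "b \<in> I" "c \<in> J" "d \<in> J" "a \<noteq> b" "c \<noteq> d"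
    "A a c < q - 1" "A b d < q - 1" "0 < A a d" "0 < A b c"
    using sw unfolding has_switch_def by blast
  define \<rho> where "\<rho> x = (if x = a then 1 else if x = b then -1 else 0 :: int)" for x
  define \<gamma> where "\<gamma> y = (if y = c then 1 else if y = d then -1 else 0 :: int)" for y
  define B where "B x y = nat (int (A x y) + \<rho> x * \<gamma> y)" for x y
  have B_int: "int (B x y) = int (A x y) + \<rho> x * \<gamma> y" for x y
    unfolding B_def \<rho>_def \<gamma>_def using abcd by auto
  have \<rho>_sum: "(\<Sum>x\<in>I. \<rho> x) = 0" and \<gamma>_sum: "(\<Sum>y\<in>J. \<gamma> y) = 0"
    using abcd fin by (simp_all add: \<rho>_def \<gamma>_def sum.If_cases Int_absorb1 insert_absorb)
  have "B x y < q" if "x \<in> I" "y \<in> J" for x y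
  proof -
    have "A x y < q" using A that by (auto simp: matrices_on_def)
    thus ?thesis using abcd by (auto simp: B_def \<rho>_def \<gamma>_def)
  qed
  hence "B \<in> matrices_on q I J"
    using A abcd unfolding matrices_on_def by (auto simp: B_def \<rho>_def \<gamma>_def)
  moreover have "same_margins I J A B"
    unfolding same_margins_def
  proof (intro conjI ballI)
    fix i assume "i \<in> I"
    have "int (\<Sum>j\<in>J. B i j) = int (\<Sum>j\<in>J. A i j) + \<rho> i * (\<Sum>j\<in>J. \<gamma> j)"
      by (simp add: B_int sum.distrib sum_distrib_left)
    thus "(\<Sum>j\<in>J. B i j) = (\<Sum>j\<in>J. A i j)" by (simp add: \<gamma>_sum del: of_nat_sum)
  next
    fix j assume "j \<in> J"
    have "int (\<Sum>i\<in>I. B i j) = int (\<Sum>i\<in>I. A i j) + (\<Sum>i\<in>I. \<rho> i) * \<gamma> j"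
      by (simp add: B_int sum.distrib sum_distrib_right)
    thus "(\<Sum>i\<in>I. B i j) = (\<Sum>i\<in>I. A i j)" by (simp add: \<rho>_sum del: of_nat_sum)
  qed
  moreover have "B a c \<noteq> A a c" using B_int [of a c] abcd by (simp add: \<rho>_def \<gamma>_def)
  ultimately show ?thesis using that by blast
qed

lemma restrict_switch_free:
  assumes A: "A \<in> switch_free q I J" and "S \<subseteq> I" "T \<subseteq> J"
  shows "restrict_mat S T A \<in> switch_free q S T"
proof -
  have "restrict_mat S T A \<in> matrices_on q S T"
    using A assms(2,3) unfolding switch_free_def matrices_on_def restrict_mat_def by auto
  moreover have "\<not> has_switch q S T (restrict_mat S T A)"
  proof
    assume "has_switch q S T (restrict_mat S T A)"
    hence "has_switch q I J A"
      using assms(2,3) unfolding has_switch_def restrict_mat_def by (auto 0 0) (blast+)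
    thus False using A unfolding switch_free_def by auto
  qed
  ultimately show ?thesis unfolding switch_free_def by auto
qed

text \<open>A matrix equal to q - 1 outside one row is determined by its margins among matrices with
  entries below q: every other row is forced to be full, and the remaining row by the column sums.\<close>

lemma row_pinned_unique:
  assumes fin: "finite R" "finite C" and i0: "i0 \<in> R"
    and A: "\<forall>i\<in>R. \<forall>j\<in>C. i \<noteq> i0 \<longrightarrow> A i j = q - 1"
    and B: "\<forall>i\<in>R. \<forall>j\<in>C. B i j < q" and margins: "same_margins R C A B"
  shows "\<forall>i\<in>R. \<forall>j\<in>C. B i j = A i j"
proof -
  have other_rows: "B i j = A i j" if "i \<in> R" "j \<in> C" "i \<noteq> i0" for i j
  proof -
    have "(\<Sum>j\<in>C. B i j) = (\<Sum>j\<in>C. A i j)" using margins that(1) by (simp add: same_margins_def)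
    thus ?thesis
      by (rule sum_mono_inv) (use that A B fin in fastforce)+
  qed
  have "B i0 j = A i0 j" if "j \<in> C" for j
  proof -
    have "(\<Sum>i\<in>R. B i j) = (\<Sum>i\<in>R. A i j)" using margins that by (simp add: same_margins_def)
    moreover have "(\<Sum>i\<in>R - {i0}. B i j) = (\<Sum>i\<in>R - {i0}. A i j)"
      using other_rows that by (intro sum.cong) auto
    ultimately show ?thesis
      using sum.remove [OF fin(1) i0, of "\<lambda>i. B i j"] sum.remove [OF fin(1) i0, of "\<lambda>i. A i j"] by simp
  qed
  thus ?thesis using other_rows by blast
qed

text \<open>The same for a single column, by transposition.\<close>

lemma col_pinned_unique:
  assumes fin: "finite R" "finite C" and j0: "j0 \<in> C"
    and A: "\<forall>i\<in>R. \<forall>j\<in>C. j \<noteq> j0 \<longrightarrow> A i j = q - 1"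
    and B: "\<forall>i\<in>R. \<forall>j\<in>C. B i j < q" and margins: "same_margins R C A B"
  shows "\<forall>i\<in>R. \<forall>j\<in>C. B i j = A i j"
proof -
  have "\<forall>j\<in>C. \<forall>i\<in>R. B i j = A i j"
  proof (rule row_pinned_unique [of C R j0 "\<lambda>j i. A i j" q "\<lambda>j i. B i j"])
    show "same_margins C R (\<lambda>j i. A i j) (\<lambda>j i. B i j)"
      by (rule iffD2 [OF same_margins_transpose margins])
  qed (use fin j0 A B in blast)+
  thus ?thesis by blast
qed

section \<open>The canonical block of a switch-free matrix\<close>

definition nonzero_cols :: "nat set \<Rightarrow> nat set \<Rightarrow> (nat \<Rightarrow> nat \<Rightarrow> nat) \<Rightarrow> nat set" where
  "nonzero_cols I J A = {j\<in>J. \<exists>i\<in>I. A i j \<noteq> 0}"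

definition block_rows :: "nat set \<Rightarrow> nat set \<Rightarrow> (nat \<Rightarrow> nat \<Rightarrow> nat) \<Rightarrow> nat set" where
  "block_rows I J A = {i\<in>I. \<forall>j\<in>nonzero_cols I J A. A i j \<noteq> 0}"

definition block_cols :: "nat set \<Rightarrow> nat set \<Rightarrow> (nat \<Rightarrow> nat \<Rightarrow> nat) \<Rightarrow> nat set" where
  "block_cols I J A = {j\<in>nonzero_cols I J A. \<forall>i\<in>I. A i j \<noteq> 0 \<longrightarrow> i \<in> block_rows I J A}"

lemma block_rows_subset: "block_rows I J A \<subseteq> I"
  and block_cols_subset: "block_cols I J A \<subseteq> J"
  by (auto simp: block_rows_def block_cols_def nonzero_cols_def)

definition block_matrices :: "nat \<Rightarrow> nat set \<Rightarrow> nat set \<Rightarrow> (nat \<Rightarrow> nat \<Rightarrow> nat) set" where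
  "block_matrices q R C = {A \<in> switch_free q R C. \<forall>i\<in>R. \<forall>j\<in>C. 0 < A i j}"

lemma restrict_block_matrices:
  assumes A: "A \<in> switch_free q I J"
  shows "restrict_mat (block_rows I J A) (block_cols I J A) A
           \<in> block_matrices q (block_rows I J A) (block_cols I J A)"
  using restrict_switch_free [OF A block_rows_subset block_cols_subset]
  unfolding block_matrices_def by (auto simp: restrict_mat_def block_rows_def block_cols_def)

definition pinned :: "nat \<Rightarrow> nat set \<Rightarrow> nat set \<Rightarrow> (nat \<times> nat) set \<Rightarrow> (nat \<Rightarrow> nat \<Rightarrow> nat) set" where
  "pinned q R C S =
     {A \<in> matrices_on q R C. \<forall>i\<in>R. \<forall>j\<in>C. 0 < A i j \<and> ((i, j) \<notin> S \<longrightarrow> A i j = q - 1)}"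

lemma pinned_Int: "pinned q R C S \<inter> pinned q R C T = pinned q R C (S \<inter> T)"
  by (auto simp: pinned_def)

lemma pinned_mono: "S \<subseteq> T \<Longrightarrow> pinned q R C S \<subseteq> pinned q R C T"
  by (auto simp: pinned_def)

lemma finite_pinned:
  assumes "finite R" "finite C"
  shows "finite (pinned q R C S)"
  using finite_matrices_on [OF assms, of q] by (rule finite_subset [rotated]) (auto simp: pinned_def)

type_synonym decomposition = "(nat set \<times> nat set) \<times> (nat \<Rightarrow> nat \<Rightarrow> nat) \<times> (nat \<Rightarrow> nat \<Rightarrow> nat)"

definition decompose :: "nat set \<Rightarrow> nat set \<Rightarrow> (nat \<Rightarrow> nat \<Rightarrow> nat) \<Rightarrow> decomposition" where
  "decompose I J A =
     (let R = block_rows I J A; C = block_cols I J A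
      in ((R, C), (restrict_mat R C A, restrict_mat (I - R) (J - C) A)))"

definition assemble :: "nat \<Rightarrow> decomposition \<Rightarrow> nat \<Rightarrow> nat \<Rightarrow> nat" where
  "assemble q d = (case d of ((R, C), (B, X)) \<Rightarrow>
     (\<lambda>i j. if i \<in> R then (if j \<in> C then B i j else if \<exists>i'. X i' j \<noteq> 0 then q - 1 else 0)
            else X i j))"

definition decompositions :: "nat \<Rightarrow> nat set \<Rightarrow> nat set \<Rightarrow> decomposition set" where
  "decompositions q I J =
     (SIGMA (R, C) : {(R, C). R \<subseteq> I \<and> C \<subseteq> J \<and> R \<noteq> {} \<and> C \<noteq> {}}.
        block_matrices q R C \<times> switch_free q (I - R) (J - C))"

lemma decompositionE:
  assumes "d \<in> decompositions q I J"
  obtains R C B X where "d = ((R, C), (B, X))" "R \<subseteq> I" "C \<subseteq> J" "R \<noteq> {}" "C \<noteq> {}"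
    "B \<in> block_matrices q R C" "X \<in> switch_free q (I - R) (J - C)"
  using assms unfolding decompositions_def by auto

context
  fixes q :: nat
  assumes q2: "2 \<le> q"
begin

text \<open>In a switch-free matrix the supports of any two rows are nested (and likewise for columns).\<close>

lemma switch_free_no_cross:
  assumes A: "A \<in> switch_free q I J" and "i \<in> I" "i' \<in> I" "j \<in> J" "j' \<in> J"
    and "A i j \<noteq> 0" "A i j' = 0" "A i' j = 0" "A i' j' \<noteq> 0"
  shows False
proof -
  have "i \<noteq> i'" "j \<noteq> j'" using assms by auto
  hence "has_switch q I J A" unfolding has_switch_def using assms q2
    by (intro bexI [of _ i] bexI [of _ i'] bexI [of _ j'] bexI [of _ j]) auto
  thus False using A by (simp add: switch_free_def)
qed

text \<open>A row of maximal support is a block row.\<close>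

lemma block_rows_nonempty:
  assumes A: "A \<in> switch_free q I J" and fin: "finite J" and i0: "i0 \<in> I"
  shows "block_rows I J A \<noteq> {}"
proof -
  define support where "support i = {j\<in>J. A i j \<noteq> 0}" for i
  have "\<exists>i. i \<in> I \<and> (\<forall>i'. i' \<in> I \<longrightarrow> card (support i') \<le> card (support i))"
    by (rule ex_has_greatest_nat [where b = "Suc (card J)"])
      (use i0 fin in \<open>auto simp: support_def intro: card_mono le_imp_less_Suc\<close>)
  then obtain i where i: "i \<in> I" and max: "\<And>i'. i' \<in> I \<Longrightarrow> card (support i') \<le> card (support i)"
    by blast
  have "i \<in> block_rows I J A"
    unfolding block_rows_def
  proof (intro CollectI conjI ballI i)
    fix j assume "j \<in> nonzero_cols I J A"
    then obtain i' where j: "j \<in> J" "i' \<in> I" "A i' j \<noteq> 0" unfolding nonzero_cols_def by blast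
    show "A i j \<noteq> 0"
    proof
      assume j0: "A i j = 0"
      have "support i \<subseteq> support i'"
        using switch_free_no_cross [OF A i j(2) _ j(1)] j j0 unfolding support_def by blast
      hence "support i \<subset> support i'" using j j0 unfolding support_def by blast
      hence "card (support i) < card (support i')" unfolding support_def using fin by (intro psubset_card_mono) auto
      thus False using max [OF j(2)] by simp
    qed
  qed
  thus ?thesis by auto
qed

text \<open>A nonzero column of minimal support is a block column.\<close>

lemma block_cols_nonempty:
  assumes A: "A \<in> switch_free q I J" and fin: "finite I"
    and nz: "i0 \<in> I" "j0 \<in> J" "A i0 j0 \<noteq> 0"
  shows "block_cols I J A \<noteq> {}"
proof -
  define support where "support j = {i\<in>I. A i j \<noteq> 0}" for j
  have "j0 \<in> nonzero_cols I J A" using nz unfolding nonzero_cols_def by blast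
  hence "\<exists>j. j \<in> nonzero_cols I J A
      \<and> (\<forall>j'. j' \<in> nonzero_cols I J A \<longrightarrow> card (support j) \<le> card (support j'))"
    by (rule ex_has_least_nat [where P = "\<lambda>j. j \<in> nonzero_cols I J A" and m = "\<lambda>j. card (support j)"])
  then obtain j where j: "j \<in> nonzero_cols I J A"
    and min: "\<And>j'. j' \<in> nonzero_cols I J A \<Longrightarrow> card (support j) \<le> card (support j')"
    by blast
  have "j \<in> block_cols I J A"
    unfolding block_cols_def
  proof (intro CollectI conjI ballI impI j)
    fix i assume i: "i \<in> I" "A i j \<noteq> 0"
    show "i \<in> block_rows I J A"
    proof (rule ccontr)
      assume "i \<notin> block_rows I J A"
      then obtain j' where j': "j' \<in> nonzero_cols I J A" "A i j' = 0"
        using i unfolding block_rows_def by blast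
      have jJ: "j \<in> J" "j' \<in> J" using j j' unfolding nonzero_cols_def by auto
      have "support j' \<subseteq> support j"
        using switch_free_no_cross [OF A i(1) _ jJ(1) jJ(2) i(2) j'(2)] unfolding support_def by blast
      hence "support j' \<subset> support j" using i j' unfolding support_def by blast
      hence "card (support j') < card (support j)"
        unfolding support_def using fin by (intro psubset_card_mono) auto
      thus False using min [OF j'(1)] by simp
    qed
  qed
  thus ?thesis by auto
qed

lemma block_rows_full:
  assumes A: "A \<in> switch_free q I J" and i: "i \<in> block_rows I J A"
    and j: "j \<in> nonzero_cols I J A" "j \<notin> block_cols I J A"
  shows "A i j = q - 1"
proof -
  obtain i' where i': "i' \<in> I" "A i' j \<noteq> 0" "i' \<notin> block_rows I J A"
    using j unfolding block_cols_def by blast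
  then obtain j' where j': "j' \<in> nonzero_cols I J A" "A i' j' = 0"
    unfolding block_rows_def by blast
  have iI: "i \<in> I" and ij': "A i j' \<noteq> 0" using i j' unfolding block_rows_def by auto
  have jJ: "j \<in> J" "j' \<in> J" using j j' unfolding nonzero_cols_def by auto
  have "A i j < q" using A iI jJ unfolding switch_free_def matrices_on_def by auto
  moreover have "\<not> A i j < q - 1"
  proof
    assume "A i j < q - 1"
    moreover have "i \<noteq> i'" "j \<noteq> j'" using ij' j' i' by auto
    ultimately have "has_switch q I J A" unfolding has_switch_def using iI i' jJ j' ij' q2
      by (intro bexI [of _ i] bexI [of _ i'] bexI [of _ j] bexI [of _ j']) auto
    thus False using A by (simp add: switch_free_def)
  qed
  ultimately show ?thesis by linarith
qed

subsection \<open>Counting positive switch-free blocks\<close>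

lemma card_pinned:
  assumes "S \<subseteq> R \<times> C" "finite S"
  shows "card (pinned q R C S) = (q - 1) ^ card S"
proof -
  let ?f = "\<lambda>A. restrict (\<lambda>(i, j). A i j) S"
  let ?g = "\<lambda>h i j. if i \<in> R \<and> j \<in> C then (if (i, j) \<in> S then h (i, j) else q - 1) else 0"
  have "bij_betw ?f (pinned q R C S) (S \<rightarrow>\<^sub>E {1..<q})"
  proof (rule bij_betw_byWitness [where f' = ?g])
    show "\<forall>A\<in>pinned q R C S. ?g (?f A) = A"
      unfolding pinned_def matrices_on_def by (auto simp: fun_eq_iff)
    show "\<forall>h\<in>S \<rightarrow>\<^sub>E {1..<q}. ?f (?g h) = h"
      using assms(1) by (auto simp: fun_eq_iff PiE_def extensional_def)
    show "?f ` pinned q R C S \<subseteq> S \<rightarrow>\<^sub>E {1..<q}"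
      using assms(1) unfolding pinned_def matrices_on_def by (auto simp: Suc_le_eq)
    show "?g ` (S \<rightarrow>\<^sub>E {1..<q}) \<subseteq> pinned q R C S"
      using q2 unfolding pinned_def matrices_on_def by (fastforce simp: PiE_def Pi_def)
  qed
  hence "card (pinned q R C S) = card (S \<rightarrow>\<^sub>E {1..<q})" by (rule bij_betw_same_card)
  also have "\<dots> = (q - 1) ^ card S" using assms by (simp add: card_PiE)
  finally show ?thesis .
qed

lemma block_matrices_eq:
  assumes "R \<noteq> {}"
  shows "block_matrices q R C = (\<Union>i\<in>R. pinned q R C ({i} \<times> C)) \<union> (\<Union>j\<in>C. pinned q R C (R \<times> {j}))"
proof (intro equalityI subsetI)
  fix A assume A: "A \<in> block_matrices q R C"
  let ?small = "\<lambda>i j. i \<in> R \<and> j \<in> C \<and> A i j < q - 1"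
  have mat: "A \<in> matrices_on q R C" and pos: "\<And>i j. i \<in> R \<Longrightarrow> j \<in> C \<Longrightarrow> 0 < A i j"
    and no_sw: "\<not> has_switch q R C A"
    using A unfolding block_matrices_def switch_free_def by auto
  have full: "A i j = q - 1" if "i \<in> R" "j \<in> C" "\<not> ?small i j" for i j
    using mat that unfolding matrices_on_def by fastforce
  have same_col: "j = j'" if "?small i j" "?small i' j'" "i \<noteq> i'" for i j i' j'
    using no_sw that pos unfolding has_switch_def by blast
  show "A \<in> (\<Union>i\<in>R. pinned q R C ({i} \<times> C)) \<union> (\<Union>j\<in>C. pinned q R C (R \<times> {j}))"
  proof (cases "\<exists>i j i' j'. ?small i j \<and> ?small i' j' \<and> i \<noteq> i'")
    case False
    obtain i0 where i0: "i0 \<in> R" "\<forall>i j. ?small i j \<longrightarrow> i = i0"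
      using False assms by blast
    hence "A \<in> pinned q R C ({i0} \<times> C)"
      unfolding pinned_def using mat pos full by blast
    thus ?thesis using i0 by blast
  next
    case True
    then obtain i j i' j' where s: "?small i j" "?small i' j'" "i \<noteq> i'" by blast
    have "\<forall>i'' j''. ?small i'' j'' \<longrightarrow> j'' = j"
      using same_col s by metis
    hence "A \<in> pinned q R C (R \<times> {j})"
      unfolding pinned_def using mat pos full by blast
    thus ?thesis using s by blast
  qed
next
  fix A assume A: "A \<in> (\<Union>i\<in>R. pinned q R C ({i} \<times> C)) \<union> (\<Union>j\<in>C. pinned q R C (R \<times> {j}))"
  have "\<not> has_switch q R C A"
    using A unfolding has_switch_def pinned_def by auto (metis less_irrefl)+
  thus "A \<in> block_matrices q R C"
    using A unfolding block_matrices_def switch_free_def pinned_def by auto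
qed

text \<open>Inclusion-exclusion over the row-pinned and column-pinned families gives f_q.\<close>

lemma card_block_matrices:
  assumes fin: "finite R" "finite C" and ne: "R \<noteq> {}" "C \<noteq> {}"
  shows "real (card (block_matrices q R C)) = f_q q (card R) (card C)"
proof -
  let ?P = "pinned q R C"
  let ?U1 = "\<Union>i\<in>R. ?P ({i} \<times> C)" and ?U2 = "\<Union>j\<in>C. ?P (R \<times> {j})"
  have card_center: "card (?P {}) = 1" using card_pinned [of "{}" R C] by simp
  have center: "?P {} \<subseteq> ?P S" for S by (rule pinned_mono) simp
  have row: "card (?P ({i} \<times> C)) = (q - 1) ^ card C" if "i \<in> R" for i
    using card_pinned [of "{i} \<times> C" R C] that fin by (simp add: card_cartesian_product subset_iff)
  have col: "card (?P (R \<times> {j})) = (q - 1) ^ card R" if "j \<in> C" for j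
    using card_pinned [of "R \<times> {j}" R C] that fin by (simp add: card_cartesian_product subset_iff)
  have cell: "card (?P {p}) = q - 1" if "p \<in> R \<times> C" for p
    using card_pinned [of "{p}" R C] that by simp
  have c1: "card ?U1 = 1 + card R * ((q - 1) ^ card C - 1)"
  proof -
    have "card ?U1 = card (?P {}) + (\<Sum>i\<in>R. card (?P ({i} \<times> C)) - card (?P {}))"
      by (rule card_sunflower) (use fin ne center in \<open>auto simp: finite_pinned pinned_Int Times_Int_Times\<close>)
    also have "\<dots> = 1 + card R * ((q - 1) ^ card C - 1)"
      using fin by (simp add: card_center row col cell card_cartesian_product)
    finally show ?thesis .
  qed
  have c2: "card ?U2 = 1 + card C * ((q - 1) ^ card R - 1)"
  proof -
    have "card ?U2 = card (?P {}) + (\<Sum>j\<in>C. card (?P (R \<times> {j})) - card (?P {}))"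
      by (rule card_sunflower) (use fin ne center in \<open>auto simp: finite_pinned pinned_Int Times_Int_Times\<close>)
    also have "\<dots> = 1 + card C * ((q - 1) ^ card R - 1)"
      using fin by (simp add: card_center row col cell card_cartesian_product)
    finally show ?thesis .
  qed
  have c3: "card (?U1 \<inter> ?U2) = 1 + card R * card C * (q - 2)"
  proof -
    have "?U1 \<inter> ?U2 = (\<Union>p\<in>R \<times> C. ?P {p})"
    proof -
      have "?P ({i} \<times> C) \<inter> ?P (R \<times> {j}) = ?P {(i, j)}" if "i \<in> R" "j \<in> C" for i j
        using that by (simp add: pinned_Int Times_Int_Times)
      thus ?thesis by blast
    qed
    hence "card (?U1 \<inter> ?U2) = card (?P {}) + (\<Sum>p\<in>R \<times> C. card (?P {p}) - card (?P {}))"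
      by (simp only:) (rule card_sunflower; use fin ne center in \<open>auto simp: finite_pinned pinned_Int Times_Int_Times\<close>)
    also have "\<dots> = 1 + card R * card C * (q - 2)"
      using fin by (simp add: card_center row col cell card_cartesian_product numeral_2_eq_2)
    finally show ?thesis .
  qed
  have "card (block_matrices q R C) + card (?U1 \<inter> ?U2) = card ?U1 + card ?U2"
    unfolding block_matrices_eq [OF ne(1)] using fin by (intro card_Un_Int [symmetric]) (auto simp: finite_pinned)
  hence "real (card (block_matrices q R C)) = real (card ?U1) + real (card ?U2) - real (card (?U1 \<inter> ?U2))"
    by linarith
  also have "\<dots> = f_q q (card R) (card C)"
  proof -
    have "real ((q - 1) ^ n - 1) = (real q - 1) ^ n - 1" for n
      using q2 by (simp add: of_nat_diff)
    thus ?thesis unfolding c1 c2 c3 f_q_def using q2 by (simp add: of_nat_diff algebra_simps)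
  qed
  finally show ?thesis .
qed

lemma block_matrix_unique:
  assumes fin: "finite R" "finite C" and "R \<noteq> {}" and A: "A \<in> block_matrices q R C"
    and B: "\<forall>i\<in>R. \<forall>j\<in>C. B i j < q" and margins: "same_margins R C A B"
  shows "\<forall>i\<in>R. \<forall>j\<in>C. B i j = A i j"
proof -
  from A consider i0 where "i0 \<in> R" "A \<in> pinned q R C ({i0} \<times> C)"
    | j0 where "j0 \<in> C" "A \<in> pinned q R C (R \<times> {j0})"
    using block_matrices_eq [OF \<open>R \<noteq> {}\<close>] by blast
  thus ?thesis
  proof cases
    case 1
    thus ?thesis using row_pinned_unique [OF fin _ _ B margins] unfolding pinned_def by auto
  next
    case 2
    thus ?thesis using col_pinned_unique [OF fin _ _ B margins] unfolding pinned_def by auto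
  qed
qed

text \<open>Margins force any competitor B to agree with A off the block: comparing the total of B over
  R x C computed via the rows R and via the columns C, using B \<le> A = q - 1 on R x (J - C) and
  A = 0 \<le> B on (I - R) x C.\<close>

lemma margins_force_off_block:
  assumes fin: "finite I" "finite J" and A: "A \<in> switch_free q I J"
    and B: "\<forall>i\<in>I. \<forall>j\<in>J. B i j < q" and margins: "same_margins I J A B"
  defines "R \<equiv> block_rows I J A" and "C \<equiv> block_cols I J A"
  shows "\<forall>i\<in>R. \<forall>j\<in>J - C. B i j = A i j" and "\<forall>i\<in>I - R. \<forall>j\<in>C. B i j = A i j"
proof -
  let ?N = "nonzero_cols I J A"
  have RI: "R \<subseteq> I" and CJ: "C \<subseteq> J" unfolding R_def C_def by (rule block_rows_subset block_cols_subset)+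
  have A_below: "A i j = 0" if "i \<in> I - R" "j \<in> C" for i j
    using that unfolding R_def C_def block_cols_def by auto
  have B_zero_col: "B i j = 0" if "i \<in> I" "j \<in> J - ?N" for i j
  proof -
    have "(\<Sum>i\<in>I. B i j) = (\<Sum>i\<in>I. A i j)" using margins that(2) by (simp add: same_margins_def)
    also have "\<dots> = 0" using that(2) by (simp add: nonzero_cols_def)
    finally show ?thesis using that(1) fin(1) by simp
  qed
  have le: "B i j \<le> A i j" if "i \<in> R" "j \<in> J - C" for i j
  proof (cases "j \<in> ?N")
    case True
    hence "A i j = q - 1" using block_rows_full [OF A] that unfolding R_def C_def by auto
    thus ?thesis using B that RI by fastforce
  qed (use B_zero_col that RI in auto)
  define a1 where "a1 = (\<Sum>i\<in>R. \<Sum>j\<in>C. B i j)"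
  define a2 where "a2 = (\<Sum>i\<in>R. \<Sum>j\<in>J - C. B i j)"
  define a3 where "a3 = (\<Sum>j\<in>C. \<Sum>i\<in>I - R. B i j)"
  define b1 where "b1 = (\<Sum>i\<in>R. \<Sum>j\<in>C. A i j)"
  define b2 where "b2 = (\<Sum>i\<in>R. \<Sum>j\<in>J - C. A i j)"
  have "a1 + a2 = b1 + b2"
  proof -
    have "(\<Sum>i\<in>R. \<Sum>j\<in>J. B i j) = (\<Sum>i\<in>R. \<Sum>j\<in>J. A i j)"
      by (rule sum.cong [OF refl]) (use margins RI in \<open>auto simp: same_margins_def\<close>)
    thus ?thesis unfolding a1_def a2_def b1_def b2_def
      by (simp add: sum.subset_diff [OF CJ fin(2)] sum.distrib add.commute)
  qed
  moreover have "a1 + a3 = b1"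
  proof -
    have "(\<Sum>j\<in>C. \<Sum>i\<in>I. B i j) = (\<Sum>j\<in>C. \<Sum>i\<in>I. A i j)"
      by (rule sum.cong [OF refl]) (use margins CJ in \<open>auto simp: same_margins_def\<close>)
    moreover have "(\<Sum>j\<in>C. \<Sum>i\<in>I - R. A i j) = 0" using A_below by simp
    ultimately have "(\<Sum>j\<in>C. \<Sum>i\<in>R. B i j) + a3 = (\<Sum>j\<in>C. \<Sum>i\<in>R. A i j)"
      unfolding a3_def by (simp add: sum.subset_diff [OF RI fin(1)] sum.distrib add.commute)
    thus ?thesis unfolding a1_def b1_def by (simp add: sum.swap [of _ C R])
  qed
  moreover have "a2 \<le> b2" unfolding a2_def b2_def using le by (intro sum_mono) auto
  ultimately have "a3 = 0" "a2 = b2" by linarith+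
  have finRC: "finite R" "finite C" using RI CJ fin finite_subset by auto
  show "\<forall>i\<in>I - R. \<forall>j\<in>C. B i j = A i j"
    using \<open>a3 = 0\<close> A_below fin finRC unfolding a3_def by simp
  show "\<forall>i\<in>R. \<forall>j\<in>J - C. B i j = A i j"
  proof (intro ballI)
    fix i j assume ij: "i \<in> R" "j \<in> J - C"
    have "(\<Sum>j\<in>J - C. B i j) = (\<Sum>j\<in>J - C. A i j)"
      by (rule sum_mono_inv [OF \<open>a2 = b2\<close> [unfolded a2_def b2_def] _ ij(1) finRC(1)])
        (use le in \<open>auto intro!: sum_mono\<close>)
    thus "B i j = A i j" by (rule sum_mono_inv) (use le ij fin in auto)
  qed
qed

text \<open>Induction on the number of rows: the block is determined by the pinned structure, the
  remaining matrix by the induction hypothesis.\<close>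

lemma switch_free_unique:
  assumes "finite I" "finite J" "A \<in> switch_free q I J"
    and "\<forall>i\<in>I. \<forall>j\<in>J. B i j < q" "same_margins I J A B"
  shows "\<forall>i\<in>I. \<forall>j\<in>J. B i j = A i j"
  using assms
proof (induction "card I" arbitrary: I J A B rule: less_induct)
  case less
  note fin = less.prems(1,2) and A = less.prems(3) and B = less.prems(4) and margins = less.prems(5)
  show ?case
  proof (cases "\<exists>i\<in>I. \<exists>j\<in>J. A i j \<noteq> 0")
    case False
    have "B i j = A i j" if "i \<in> I" "j \<in> J" for i j
    proof -
      have "(\<Sum>i\<in>I. B i j) = (\<Sum>i\<in>I. A i j)" using margins that(2) by (simp add: same_margins_def)
      also have "\<dots> = 0" using False that(2) by simp
      finally show ?thesis using False that fin(1) by simp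
    qed
    thus ?thesis by blast
  next
    case True
    then obtain i0 j0 where nz: "i0 \<in> I" "j0 \<in> J" "A i0 j0 \<noteq> 0" by blast
    define R where "R = block_rows I J A"
    define C where "C = block_cols I J A"
    have RI: "R \<subseteq> I" and CJ: "C \<subseteq> J"
      unfolding R_def C_def by (rule block_rows_subset block_cols_subset)+
    have "R \<noteq> {}" unfolding R_def by (rule block_rows_nonempty [OF A fin(2) nz(1)])
    have finRC: "finite R" "finite C" using RI CJ fin finite_subset by auto
    have off: "\<forall>i\<in>R. \<forall>j\<in>J - C. B i j = A i j" "\<forall>i\<in>I - R. \<forall>j\<in>C. B i j = A i j"
      using margins_force_off_block [OF fin A B margins] unfolding R_def C_def by blast+
    have "same_margins R C A B" "same_margins (I - R) (J - C) A B"
      using same_margins_blocks [OF margins RI CJ fin] off by blast+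
    have block: "\<forall>i\<in>R. \<forall>j\<in>C. B i j = A i j"
    proof -
      have "same_margins R C (restrict_mat R C A) B"
        using \<open>same_margins R C A B\<close> by (subst same_margins_cong) (auto simp: restrict_mat_def)
      hence "\<forall>i\<in>R. \<forall>j\<in>C. B i j = restrict_mat R C A i j"
        using block_matrix_unique [OF finRC \<open>R \<noteq> {}\<close>] restrict_block_matrices [OF A] B RI CJ
        unfolding R_def C_def by blast
      thus ?thesis by (simp add: restrict_mat_def)
    qed
    have rest: "\<forall>i\<in>I - R. \<forall>j\<in>J - C. B i j = A i j"
    proof -
      have "card (I - R) < card I"
        by (rule psubset_card_mono [OF fin(1)]) (use RI \<open>R \<noteq> {}\<close> in blast)
      moreover have "same_margins (I - R) (J - C) (restrict_mat (I - R) (J - C) A) B"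
        using \<open>same_margins (I - R) (J - C) A B\<close> by (subst same_margins_cong) (auto simp: restrict_mat_def)
      ultimately have "\<forall>i\<in>I - R. \<forall>j\<in>J - C. B i j = restrict_mat (I - R) (J - C) A i j"
        using less.hyps restrict_switch_free [OF A, of "I - R" "J - C"] B fin by blast
      thus ?thesis by (simp add: restrict_mat_def)
    qed
    show ?thesis using block off rest by blast
  qed
qed

lemma strong_lonesum_iff_switch_free:
  "strong_lonesum q m n A \<longleftrightarrow> A \<in> switch_free q {..<m} {..<n}"
proof
  assume lonesum: "strong_lonesum q m n A"
  hence A: "A \<in> matrices_on q {..<m} {..<n}" unfolding strong_lonesum_def qary_matrices_eq by auto
  have "\<not> has_switch q {..<m} {..<n} A"
  proof
    assume "has_switch q {..<m} {..<n} A"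
    then obtain B where "B \<in> matrices_on q {..<m} {..<n}" "same_margins {..<m} {..<n} A B" "B \<noteq> A"
      using switch_breaks_uniqueness [OF A] by blast
    thus False using lonesum unfolding strong_lonesum_def qary_matrices_eq margins_eq_same_margins by blast
  qed
  thus "A \<in> switch_free q {..<m} {..<n}" using A by (simp add: switch_free_def)
next
  assume A: "A \<in> switch_free q {..<m} {..<n}"
  show "strong_lonesum q m n A" unfolding strong_lonesum_def qary_matrices_eq margins_eq_same_margins
  proof (intro conjI ballI impI)
    show "A \<in> matrices_on q {..<m} {..<n}" using A unfolding switch_free_def by auto
    fix B assume B: "B \<in> matrices_on q {..<m} {..<n}" and margins: "same_margins {..<m} {..<n} A B"
    have agree: "\<forall>i\<in>{..<m}. \<forall>j\<in>{..<n}. B i j = A i j"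
      using switch_free_unique [OF _ _ A _ margins] B by (simp add: matrices_on_def)
    show "B = A"
    proof (intro ext)
      fix i j
      show "B i j = A i j"
      proof (cases "i < m \<and> j < n")
        case True
        thus ?thesis using agree by simp
      next
        case False
        thus ?thesis using A B by (auto simp: switch_free_def matrices_on_def)
      qed
    qed
  qed
qed

subsection \<open>The decomposition bijection and the counting recursion\<close>

lemma decompose_in:
  assumes A: "A \<in> switch_free q I J" "A \<noteq> (\<lambda>_ _. 0)" and fin: "finite I" "finite J"
  shows "decompose I J A \<in> decompositions q I J"
proof -
  obtain i0 j0 where nz: "A i0 j0 \<noteq> 0" using A(2) by (auto simp: fun_eq_iff)
  hence ij: "i0 \<in> I" "j0 \<in> J" using A(1) unfolding switch_free_def matrices_on_def
    by (metis (mono_tags, lifting) mem_Collect_eq)+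
  have "block_rows I J A \<noteq> {}" "block_cols I J A \<noteq> {}"
    using block_rows_nonempty [OF A(1) fin(2) ij(1)] block_cols_nonempty [OF A(1) fin(1) ij nz] .
  moreover have "restrict_mat (I - block_rows I J A) (J - block_cols I J A) A
      \<in> switch_free q (I - block_rows I J A) (J - block_cols I J A)"
    by (rule restrict_switch_free [OF A(1)]) auto
  ultimately show ?thesis
    using restrict_block_matrices [OF A(1)] block_rows_subset block_cols_subset
    unfolding decompositions_def decompose_def Let_def by auto
qed

lemma assemble_decompose:
  assumes A: "A \<in> switch_free q I J"
  shows "assemble q (decompose I J A) = A"
proof -
  have A0: "\<And>i j. i \<notin> I \<or> j \<notin> J \<Longrightarrow> A i j = 0" using A unfolding switch_free_def matrices_on_def by auto
  define R where "R = block_rows I J A"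
  define C where "C = block_cols I J A"
  define X where "X = restrict_mat (I - R) (J - C) A"
  have RI: "R \<subseteq> I" unfolding R_def by (rule block_rows_subset)
  have eq: "assemble q (decompose I J A) i j =
      (if i \<in> R then (if j \<in> C then A i j else if \<exists>i'. X i' j \<noteq> 0 then q - 1 else 0) else X i j)" for i j
    by (simp add: assemble_def decompose_def Let_def R_def [symmetric] C_def [symmetric] X_def [symmetric])
      (simp add: restrict_mat_def)
  have "assemble q (decompose I J A) i j = A i j" for i j
  proof (cases "i \<in> R")
    case iR: True
    show ?thesis
    proof (cases "j \<in> C")
      case jC: False
      show ?thesis
      proof (cases "\<exists>i'. X i' j \<noteq> 0")
        case True
        then obtain i' where "i' \<in> I" "i' \<notin> R" "j \<in> J" "A i' j \<noteq> 0"
          unfolding X_def restrict_mat_def by (auto split: if_splits)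
        hence "j \<in> nonzero_cols I J A" unfolding nonzero_cols_def by auto
        hence "A i j = q - 1" using block_rows_full [OF A] iR jC unfolding R_def C_def by auto
        thus ?thesis using iR jC True eq by simp
      next
        case False
        have "A i j = 0"
        proof (rule ccontr)
          assume nz: "A i j \<noteq> 0"
          hence "j \<in> J" using A0 by metis
          moreover have "i \<in> I" using iR RI by auto
          ultimately have "j \<in> nonzero_cols I J A" using nz unfolding nonzero_cols_def by auto
          then obtain i' where "i' \<in> I" "A i' j \<noteq> 0" "i' \<notin> R"
            using jC unfolding block_cols_def C_def R_def by auto
          hence "X i' j \<noteq> 0" using \<open>j \<in> J\<close> jC unfolding X_def restrict_mat_def by auto
          thus False using False by blast
        qed
        thus ?thesis using iR jC False eq by simp
      qed
    qed (use eq iR in simp)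
  next
    case iR: False
    have "X i j = A i j"
    proof (cases "i \<in> I \<and> j \<in> J")
      case True
      hence "j \<in> C \<Longrightarrow> A i j = 0" using iR unfolding C_def block_cols_def R_def by auto
      thus ?thesis using True iR unfolding X_def restrict_mat_def by auto
    qed (use A0 in \<open>auto simp: X_def restrict_mat_def\<close>)
    thus ?thesis using iR eq by simp
  qed
  thus ?thesis by (simp add: fun_eq_iff)
qed

lemma decompose_assemble:
  assumes d: "d \<in> decompositions q I J"
  shows "decompose I J (assemble q d) = d"
proof -
  obtain R C B X where d_eq: "d = ((R, C), (B, X))" and RC: "R \<subseteq> I" "C \<subseteq> J" "R \<noteq> {}" "C \<noteq> {}"
    and B: "B \<in> block_matrices q R C" and X: "X \<in> switch_free q (I - R) (J - C)"
    using d by (rule decompositionE)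
  have B_pos: "\<And>i j. i \<in> R \<Longrightarrow> j \<in> C \<Longrightarrow> 0 < B i j"
    and B0: "\<And>i j. i \<notin> R \<or> j \<notin> C \<Longrightarrow> B i j = 0"
    using B unfolding block_matrices_def switch_free_def matrices_on_def by auto
  have X0: "\<And>i j. i \<notin> I - R \<or> j \<notin> J - C \<Longrightarrow> X i j = 0"
    using X unfolding switch_free_def matrices_on_def by auto
  define A where "A = assemble q d"
  have A_eq: "A i j = (if i \<in> R then (if j \<in> C then B i j else if \<exists>i'. X i' j \<noteq> 0 then q - 1 else 0)
      else X i j)" for i j
    unfolding A_def d_eq assemble_def by simp
  have nonzero: "nonzero_cols I J A = C \<union> {j. \<exists>i'. X i' j \<noteq> 0}"
  proof (intro equalityI subsetI)
    fix j assume "j \<in> nonzero_cols I J A"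
    thus "j \<in> C \<union> {j. \<exists>i'. X i' j \<noteq> 0}"
      unfolding nonzero_cols_def A_eq by (auto split: if_splits)
  next
    fix j assume j: "j \<in> C \<union> {j. \<exists>i'. X i' j \<noteq> 0}"
    show "j \<in> nonzero_cols I J A"
    proof (cases "j \<in> C")
      case True
      obtain i where "i \<in> R" using RC by auto
      thus ?thesis using True RC B_pos [of i j] unfolding nonzero_cols_def A_eq by (auto intro!: bexI [of _ i])
    next
      case False
      then obtain i' where i': "X i' j \<noteq> 0" using j by auto
      hence "i' \<in> I - R" "j \<in> J - C" using X0 by metis+
      thus ?thesis using i' unfolding nonzero_cols_def A_eq by (auto intro!: bexI [of _ i'])
    qed
  qed
  have rows: "block_rows I J A = R"
  proof (intro equalityI subsetI)
    fix i assume i: "i \<in> block_rows I J A"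
    obtain j where j: "j \<in> C" using RC by auto
    hence "A i j \<noteq> 0" using i nonzero unfolding block_rows_def by auto
    thus "i \<in> R" using X0 [of i j] j unfolding A_eq by (auto split: if_splits)
  next
    fix i assume "i \<in> R"
    thus "i \<in> block_rows I J A" unfolding block_rows_def nonzero using RC B_pos q2 unfolding A_eq by auto
  qed
  have cols: "block_cols I J A = C"
  proof (intro equalityI subsetI)
    fix j assume j: "j \<in> block_cols I J A"
    show "j \<in> C"
    proof (rule ccontr)
      assume "j \<notin> C"
      then obtain i' where i': "X i' j \<noteq> 0" using j nonzero unfolding block_cols_def by auto
      hence "i' \<in> I - R" "j \<in> J - C" using X0 by metis+
      thus False using j i' unfolding block_cols_def rows A_eq by auto
    qed
  next
    fix j assume "j \<in> C"
    thus "j \<in> block_cols I J A" unfolding block_cols_def rows nonzero using X0 unfolding A_eq by auto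
  qed
  have "restrict_mat R C A = B" using B0 unfolding restrict_mat_def A_eq by (auto simp: fun_eq_iff)
  moreover have "restrict_mat (I - R) (J - C) A = X" using X0 unfolding restrict_mat_def A_eq by (auto simp: fun_eq_iff)
  ultimately show ?thesis using rows cols unfolding decompose_def A_def d_eq by simp
qed

lemma assemble_no_switch:
  assumes d: "d \<in> decompositions q I J"
  shows "\<not> has_switch q I J (assemble q d)"
proof
  obtain R C B X where d_eq: "d = ((R, C), (B, X))"
    and B: "B \<in> block_matrices q R C" and X: "X \<in> switch_free q (I - R) (J - C)"
    using d by (rule decompositionE)
  have B_sw: "\<not> has_switch q R C B" using B unfolding block_matrices_def switch_free_def by auto
  have X_sw: "\<not> has_switch q (I - R) (J - C) X" using X unfolding switch_free_def by auto
  have X0: "\<And>i j. i \<notin> I - R \<or> j \<notin> J - C \<Longrightarrow> X i j = 0"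
    using X unfolding switch_free_def matrices_on_def by auto
  define A where "A = assemble q d"
  have A_eq: "A i j = (if i \<in> R then (if j \<in> C then B i j else if \<exists>i'. X i' j \<noteq> 0 then q - 1 else 0)
      else X i j)" for i j
    unfolding A_def d_eq assemble_def by simp
  assume "has_switch q I J (assemble q d)"
  then obtain a b c e where abce: "a \<in> I" "b \<in> I" "c \<in> J" "e \<in> J" "a \<noteq> b" "c \<noteq> e"
    "A a c < q - 1" "A b e < q - 1" "0 < A a e" "0 < A b c"
    unfolding has_switch_def A_def by blast
  consider "a \<in> R" "b \<in> R" | "a \<in> R" "b \<notin> R" | "a \<notin> R" "b \<in> R" | "a \<notin> R" "b \<notin> R"
    by blast
  thus False
  proof cases
    case 1
    hence "c \<in> C" "e \<in> C" using abce(7-10) unfolding A_eq by (auto split: if_splits)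
    hence "has_switch q R C B" using abce 1 unfolding has_switch_def A_eq
      by (intro bexI [of _ a] bexI [of _ b] bexI [of _ c] bexI [of _ e]) auto
    thus False using B_sw by simp
  next
    case 2
    hence "c \<notin> C" "X b c \<noteq> 0" using abce(10) X0 unfolding A_eq by (auto split: if_splits)
    thus False using abce(7) 2 unfolding A_eq by (auto split: if_splits)
  next
    case 3
    hence "e \<notin> C" "X a e \<noteq> 0" using abce(9) X0 unfolding A_eq by (auto split: if_splits)
    thus False using abce(8) 3 unfolding A_eq by (auto split: if_splits)
  next
    case 4
    hence "c \<notin> C" "e \<notin> C" using abce(9,10) X0 unfolding A_eq by (auto split: if_splits)
    hence "has_switch q (I - R) (J - C) X" using abce 4 unfolding has_switch_def A_eq
      by (intro bexI [of _ a] bexI [of _ b] bexI [of _ c] bexI [of _ e]) auto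
    thus False using X_sw by simp
  qed
qed

lemma assemble_in:
  assumes d: "d \<in> decompositions q I J"
  shows "assemble q d \<in> switch_free q I J" "assemble q d \<noteq> (\<lambda>_ _. 0)"
proof -
  obtain R C B X where d_eq: "d = ((R, C), (B, X))" and RC: "R \<subseteq> I" "C \<subseteq> J" "R \<noteq> {}" "C \<noteq> {}"
    and B: "B \<in> block_matrices q R C" and X: "X \<in> switch_free q (I - R) (J - C)"
    using d by (rule decompositionE)
  have B_pos: "\<And>i j. i \<in> R \<Longrightarrow> j \<in> C \<Longrightarrow> 0 < B i j"
    and B_lt: "\<And>i j. i \<in> R \<Longrightarrow> j \<in> C \<Longrightarrow> B i j < q"
    using B unfolding block_matrices_def switch_free_def matrices_on_def by auto
  have X_lt: "\<And>i j. i \<in> I - R \<Longrightarrow> j \<in> J - C \<Longrightarrow> X i j < q"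
    and X0: "\<And>i j. i \<notin> I - R \<or> j \<notin> J - C \<Longrightarrow> X i j = 0"
    using X unfolding switch_free_def matrices_on_def by auto
  define A where "A = assemble q d"
  have A_eq: "A i j = (if i \<in> R then (if j \<in> C then B i j else if \<exists>i'. X i' j \<noteq> 0 then q - 1 else 0)
      else X i j)" for i j
    unfolding A_def d_eq assemble_def by simp
  obtain i0 j0 where "i0 \<in> R" "j0 \<in> C" using RC by auto
  hence "A i0 j0 \<noteq> 0" using B_pos unfolding A_eq by auto
  thus "assemble q d \<noteq> (\<lambda>_ _. 0)" unfolding A_def by auto
  have "A \<in> matrices_on q I J"
    unfolding matrices_on_def
  proof (intro CollectI conjI allI ballI impI)
    fix i j assume "i \<in> I" "j \<in> J"
    thus "A i j < q" unfolding A_eq using B_lt X_lt q2 X0 by auto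
  next
    fix i j assume ij: "i \<notin> I \<or> j \<notin> J"
    have "\<not> (\<exists>i'. X i' j \<noteq> 0)" if "j \<notin> J" using X0 that by (metis Diff_iff)
    thus "A i j = 0" unfolding A_eq using ij RC X0 by auto
  qed
  thus "assemble q d \<in> switch_free q I J"
    using assemble_no_switch [OF d] unfolding switch_free_def A_def by auto
qed

lemma card_switch_free_rec:
  assumes fin: "finite I" "finite J"
  shows "card (switch_free q I J) = 1 + (\<Sum>(R, C)\<in>{(R, C). R \<subseteq> I \<and> C \<subseteq> J \<and> R \<noteq> {} \<and> C \<noteq> {}}.
            card (block_matrices q R C) * card (switch_free q (I - R) (J - C)))"
proof -
  let ?Z = "(\<lambda>_ _. 0) :: nat \<Rightarrow> nat \<Rightarrow> nat"
  let ?P = "{(R, C). R \<subseteq> I \<and> C \<subseteq> J \<and> R \<noteq> {} \<and> C \<noteq> {}}"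
  have bij: "bij_betw (decompose I J) (switch_free q I J - {?Z}) (decompositions q I J)"
  proof (rule bij_betw_byWitness [where f' = "assemble q"])
    show "\<forall>A\<in>switch_free q I J - {?Z}. assemble q (decompose I J A) = A"
      using assemble_decompose  by auto
    show "\<forall>d\<in>decompositions q I J. decompose I J (assemble q d) = d"
      using decompose_assemble  by auto
    show "decompose I J ` (switch_free q I J - {?Z}) \<subseteq> decompositions q I J"
      using decompose_in [OF _ _ fin] by blast
    show "assemble q ` decompositions q I J \<subseteq> switch_free q I J - {?Z}"
      using assemble_in  by auto
  qed
  have "?Z \<in> switch_free q I J" unfolding switch_free_def matrices_on_def has_switch_def using q2 by auto
  hence "card (switch_free q I J) = 1 + card (switch_free q I J - {?Z})"
    using card_Suc_Diff1 [OF finite_switch_free [OF fin]] by simp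
  also have "card (switch_free q I J - {?Z}) = card (decompositions q I J)"
    using bij by (rule bij_betw_same_card)
  also have "\<dots> = (\<Sum>(R, C)\<in>?P. card (block_matrices q R C) * card (switch_free q (I - R) (J - C)))"
  proof -
    have "finite ?P" by (rule finite_subset [of _ "Pow I \<times> Pow J"]) (use fin in auto)
    moreover have "\<forall>(R, C)\<in>?P. finite (block_matrices q R C \<times> switch_free q (I - R) (J - C))"
      using fin by (auto simp: block_matrices_def intro!: finite_cartesian_product finite_switch_free
          intro: finite_subset)
    ultimately show ?thesis
      unfolding decompositions_def by (subst card_SigmaI) (simp_all add: case_prod_unfold card_cartesian_product)
  qed
  finally show ?thesis .
qed

text \<open>The number of switch-free matrices satisfies the coefficient recursion of the series.\<close>

lemma count_switch_free:
  assumes "finite I" "finite J"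
  shows "real (card (switch_free q I J)) = gf_count q (card I) (card J)"
  using assms
proof (induction "card I" arbitrary: I J rule: less_induct)
  case less
  note fin = less.prems
  let ?P = "{(R, C). R \<subseteq> I \<and> C \<subseteq> J \<and> R \<noteq> {} \<and> C \<noteq> {}}"
  define h where "h r s = (if 1 \<le> r \<and> 1 \<le> s then f_q q r s else 0) * gf_count q (card I - r) (card J - s)"
    for r s
  have summand: "real (card (block_matrices q R C)) * real (card (switch_free q (I - R) (J - C)))
      = h (card R) (card C)" if "(R, C) \<in> ?P" for R C
  proof -
    have RC: "R \<subseteq> I" "C \<subseteq> J" "R \<noteq> {}" "C \<noteq> {}" using that by auto
    have finRC: "finite R" "finite C" using RC fin finite_subset by auto
    have "card R \<ge> 1" "card C \<ge> 1" using finRC RC by (auto simp: Suc_le_eq card_gt_0_iff)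
    moreover have "card (I - R) < card I"
      by (rule psubset_card_mono [OF fin(1)]) (use RC in blast)
    moreover have "card (I - R) = card I - card R" "card (J - C) = card J - card C"
      using RC finRC by (auto simp: card_Diff_subset)
    ultimately show ?thesis
      using less.hyps [of "I - R" "J - C"] fin card_block_matrices [OF finRC RC(3,4)] unfolding h_def by auto
  qed
  have "real (card (switch_free q I J))
      = 1 + (\<Sum>(R, C)\<in>?P. real (card (block_matrices q R C)) * real (card (switch_free q (I - R) (J - C))))"
    using card_switch_free_rec [OF fin] by (simp add: case_prod_unfold)
  also have "\<dots> = 1 + (\<Sum>(R, C)\<in>?P. h (card R) (card C))"
    using summand by (intro arg_cong2 [where f = "(+)"] refl sum.cong) auto
  also have "(\<Sum>(R, C)\<in>?P. h (card R) (card C)) = (\<Sum>(R, C)\<in>Pow I \<times> Pow J. h (card R) (card C))"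
    by (rule sum.mono_neutral_left) (use fin in \<open>auto simp: h_def dest: finite_subset\<close>)
  also have "\<dots> = (\<Sum>R\<in>Pow I. \<Sum>C\<in>Pow J. h (card R) (card C))"
    by (rule sum.cartesian_product [symmetric])
  also have "\<dots> = (\<Sum>r\<le>card I. real (card I choose r) * (\<Sum>s\<le>card J. real (card J choose s) * h r s))"
    using sum_Pow_by_card [OF fin(1), of "\<lambda>r. \<Sum>s\<le>card J. real (card J choose s) * h r s"]
    by (simp add: sum_Pow_by_card [OF fin(2)])
  also have "1 + \<dots> = gf_count q (card I) (card J)"
    by (subst gf_count_rec) (simp add: h_def sum.swap [of _ "{..card J}"] sum_distrib_left algebra_simps)
  finally show ?case .
qed

lemma lonesum_count_eq_gf_count: "real (lonesum_count q m n) = gf_count q m n"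
proof -
  have "{A. strong_lonesum q m n A} = switch_free q {..<m} {..<n}"
    using strong_lonesum_iff_switch_free by auto
  thus ?thesis using count_switch_free [of "{..<m}" "{..<n}"] unfolding lonesum_count_def by simp
qed

end

theorem mainTheorem7:
  fixes q :: nat
  assumes "q \<ge> 2"
  shows "lonesum_egf q = (expX 1 * expY 1) * inverse (1 - F_q q)
     \<and> F_q q = Abs_fps (\<lambda>s. Abs_fps (\<lambda>r.
          if 1 \<le> r \<and> 1 \<le> s then f_q q r s / (fact r * fact s) else 0))"
proof
  have "lonesum_egf q = gf_series q"
    by (intro fps_ext) (simp add: lonesum_egf_def gf_count_def lonesum_count_eq_gf_count [OF assms])
  thus "lonesum_egf q = (expX 1 * expY 1) * inverse (1 - F_q q)"
    unfolding gf_series_def .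
  show "F_q q = Abs_fps (\<lambda>s. Abs_fps (\<lambda>r.
          if 1 \<le> r \<and> 1 \<le> s then f_q q r s / (fact r * fact s) else 0))"
    by (intro fps_ext) (simp add: F_q_nth)
qed

end
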